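(* Let $\Sigma$ be a Hamiltonian surface in the Brady complex $X$. Then for every vertex $x$ of $X$, the Hamiltonian cycle $\Sigma\cap L_x$ of the link $L_x$ is of type 3.
   Context: The Brady complex $X$ is the simply connected CAT(0) piecewise Euclidean 2-complex (constructed by T. Brady) on which $\mathrm{Aut}(F_2)$ acts properly and cocompactly by cellular isometries, transitively on vertices. Its closed 2-cells (faces) are unit equilateral triangles and unit lozenges (rhombi with angles $\pi/3$ and $2\pi/3$); every edge lies in exactly one triangle and two lozenges. The link $L_x$ of a vertex $x$ is the graph whose vertices are the edges of $X$ at $x$ and whose edges are the corners at $x$ of faces containing $x$; a link edge is labeled $t$ (triangle corner), $\ell$ (lozenge corner of angle $\pi/3$) or $\mathcal{L}$ (lozenge corner of angle $2\pi/3$). Each labeled $L_x$ is isomorphic to the Moebius ladder with vertices $u_0,\dots,u_3,w_0,\dots,w_3$, rungs $u_iw_i$ labeled $\mathcal{L}$, horizontal edges $u_0u_1,u_2u_3,w_0w_1,w_2w_3$ labeled $\ell$ and $u_1u_2,u_3w_0,w_1w_2,w_3u_0$ labeled $t$. Its Hamiltonian cycles are: type 1, the unique one with no rung; and those containing exactly two rungs joined by two horizontal paths of three edges each, which are of type 2 if these paths are labeled $\ell,t,\ell$ and of type 3 if they are labeled $t,\ell,t$. A Hamiltonian surface in $X$ is a connected union $\Sigma$ of closed faces which is a surface without boundary, contains every vertex and every edge of $X$, and has no multiple vertex; for each vertex $x$, $\Sigma\cap L_x$ (the corners of faces of $\Sigma$ at $x$) is a Hamiltonian cycle of $L_x$.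 *)

theory Defs
  imports Main
begin

text \<open>Combinatorial model of a piecewise Euclidean 2-complex whose closed 2-cells are
unit equilateral triangles and unit lozenges.  A lozenge is given by
the pair (A, B) of its two diagonals: A is the pair of vertices with angle pi/3 (acute),
B the pair of vertices with angle 2pi/3 (obtuse); its sides are the four pairs {a,o}.\<close>

datatype 'v face = Tri "'v set" | Loz "'v set" "'v set"

record 'v cplx =
  verts :: "'v set"
  edgs  :: "'v set set"
  facs  :: "'v face set"

datatype lab = Lt | Ll | LL
  (* Lt: triangle corner; Ll: lozenge corner of angle pi/3; LL: lozenge corner of angle 2pi/3 *)

fun fverts :: "'v face \<Rightarrow> 'v set" where
  "fverts (Tri T) = T"
| "fverts (Loz A B) = A \<union> B"

fun is_side :: "'v set \<Rightarrow> 'v face \<Rightarrow> bool" where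
  "is_side e (Tri T) = (e \<subseteq> T \<and> card e = 2)"
| "is_side e (Loz A B) = (\<exists>a\<in>A. \<exists>b\<in>B. e = {a, b})"

text \<open>The corner at vertex x of a face containing x: the two edges of the face at x
(a vertex pair of the link) and its label.\<close>
fun corner_edges :: "'v \<Rightarrow> 'v face \<Rightarrow> 'v set set" where
  "corner_edges x (Tri T) = (\<lambda>y. {x, y}) ` (T - {x})"
| "corner_edges x (Loz A B) =
     (if x \<in> A then (\<lambda>y. {x, y}) ` B else (\<lambda>y. {x, y}) ` A)"

fun corner_label :: "'v \<Rightarrow> 'v face \<Rightarrow> lab" where
  "corner_label x (Tri T) = Lt"
| "corner_label x (Loz A B) = (if x \<in> A then Ll else LL)"

definition edges_at :: "'v cplx \<Rightarrow> 'v \<Rightarrow> 'v set set" where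
  "edges_at C x = {e \<in> edgs C. x \<in> e}"

definition faces_at :: "'v face set \<Rightarrow> 'v \<Rightarrow> 'v face set" where
  "faces_at F x = {f \<in> F. x \<in> fverts f}"

text \<open>The labeled Moebius ladder: u_i = i, w_i = 4 + i (i < 4).\<close>
definition ladder_edges :: "(nat set \<times> lab) set" where
  "ladder_edges =
    {({0,4}, LL), ({1,5}, LL), ({2,6}, LL), ({3,7}, LL),
     ({0,1}, Ll), ({2,3}, Ll), ({4,5}, Ll), ({6,7}, Ll),
     ({1,2}, Lt), ({3,4}, Lt), ({5,6}, Lt), ({7,0}, Lt)}"

text \<open>The labeled link L_x (vertices: edges at x; link edges: corners at x of faces,
as a multigraph indexed by the faces) is isomorphic to the labeled Moebius ladder.\<close>
definition link_is_ladder :: "'v cplx \<Rightarrow> 'v \<Rightarrow> bool" where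
  "link_is_ladder C x \<longleftrightarrow>
     (\<exists>\<phi>. bij_betw \<phi> (edges_at C x) {0..<8::nat} \<and>
          bij_betw (\<lambda>f. (\<phi> ` corner_edges x f, corner_label x f))
                   (faces_at (facs C) x) ladder_edges)"

definition wf_cplx :: "'v cplx \<Rightarrow> bool" where
  "wf_cplx C \<longleftrightarrow>
     (\<forall>e\<in>edgs C. e \<subseteq> verts C \<and> card e = 2) \<and>
     (\<forall>f\<in>facs C. case f of
         Tri T \<Rightarrow> T \<subseteq> verts C \<and> card T = 3 \<and> (\<forall>e. e \<subseteq> T \<and> card e = 2 \<longrightarrow> e \<in> edgs C)
       | Loz A B \<Rightarrow> A \<union> B \<subseteq> verts C \<and> card A = 2 \<and> card B = 2 \<and> A \<inter> B = {} \<and>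
                    (\<forall>a\<in>A. \<forall>b\<in>B. {a, b} \<in> edgs C))"

definition walk :: "'v cplx \<Rightarrow> 'v list \<Rightarrow> bool" where
  "walk C p \<longleftrightarrow> p \<noteq> [] \<and> set p \<subseteq> verts C \<and>
     (\<forall>i. Suc i < length p \<longrightarrow> {p ! i, p ! Suc i} \<in> edgs C)"

fun face_loop :: "'v face \<Rightarrow> 'v list \<Rightarrow> bool" where
  "face_loop (Tri T) p \<longleftrightarrow> length p = 4 \<and> p ! 0 = p ! 3 \<and> distinct (butlast p) \<and> set p = T"
| "face_loop (Loz A B) p \<longleftrightarrow> length p = 5 \<and> p ! 0 = p ! 4 \<and> distinct (butlast p) \<and>
     {{p ! 0, p ! 2}, {p ! 1, p ! 3}} = {A, B}"

definition htpy_step :: "'v cplx \<Rightarrow> ('v list \<times> 'v list) set" where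
  "htpy_step C =
     {(xs @ [a, b, a] @ ys, xs @ [a] @ ys) | xs ys a b. {a, b} \<in> edgs C} \<union>
     {(xs @ [a] @ ys, xs @ p @ ys) | xs ys a p f. f \<in> facs C \<and> face_loop f p \<and> hd p = a}"

definition homotopic :: "'v cplx \<Rightarrow> 'v list \<Rightarrow> 'v list \<Rightarrow> bool" where
  "homotopic C p q \<longleftrightarrow> (p, q) \<in> (htpy_step C \<union> (htpy_step C)\<inverse>)\<^sup>*"

definition simply_connected :: "'v cplx \<Rightarrow> bool" where
  "simply_connected C \<longleftrightarrow>
     verts C \<noteq> {} \<and>
     (\<forall>a\<in>verts C. \<forall>b\<in>verts C. \<exists>p. walk C p \<and> hd p = a \<and> last p = b) \<and>
     (\<forall>p. walk C p \<and> hd p = last p \<longrightarrow> homotopic C p [hd p])"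

text \<open>The Brady complex (characterised combinatorially: simply connected, unit triangles
and lozenges, every edge in exactly one triangle and two lozenges, every labeled link
isomorphic to the labeled Moebius ladder).\<close>
definition brady_complex :: "'v cplx \<Rightarrow> bool" where
  "brady_complex C \<longleftrightarrow>
     wf_cplx C \<and> simply_connected C \<and>
     (\<forall>e\<in>edgs C. card {T. Tri T \<in> facs C \<and> is_side e (Tri T)} = 1 \<and>
                  card {(A, B). Loz A B \<in> facs C \<and> is_side e (Loz A B)} = 2) \<and>
     (\<forall>x\<in>verts C. link_is_ladder C x)"

text \<open>Sigma cap L_x: the corners at x of faces of S; it is a single cycle
(surface without boundary at x, no multiple vertex): every link vertex it touches has
degree exactly 2, and it is connected.\<close>
definition link_single_cycle :: "'v face set \<Rightarrow> 'v \<Rightarrow> bool" where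
  "link_single_cycle S x \<longleftrightarrow>
     (let Sx = faces_at S x; Vx = \<Union> (corner_edges x ` Sx);
          R = {(e, e'). \<exists>f\<in>Sx. corner_edges x f = {e, e'}}
      in Vx \<noteq> {} \<and>
         (\<forall>e\<in>Vx. card {f\<in>Sx. e \<in> corner_edges x f} = 2) \<and>
         (\<forall>e\<in>Vx. \<forall>e'\<in>Vx. (e, e') \<in> R\<^sup>*))"

definition hamiltonian_surface :: "'v cplx \<Rightarrow> 'v face set \<Rightarrow> bool" where
  "hamiltonian_surface C S \<longleftrightarrow>
     S \<subseteq> facs C \<and> S \<noteq> {} \<and>
     (\<forall>f\<in>S. \<forall>g\<in>S. (f, g) \<in> {(f', g'). fverts f' \<inter> fverts g' \<noteq> {}}\<^sup>*) \<and>
     (\<forall>x\<in>verts C. \<exists>f\<in>S. x \<in> fverts f) \<and>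
     (\<forall>e\<in>edgs C. \<exists>f\<in>S. is_side e f) \<and>
     (\<forall>x\<in>verts C. link_single_cycle S x)"

definition link_adj :: "'v \<Rightarrow> 'v face \<Rightarrow> 'v face \<Rightarrow> bool" where
  "link_adj x f g \<longleftrightarrow> corner_edges x f \<inter> corner_edges x g \<noteq> {}"

definition type3 :: "'v face set \<Rightarrow> 'v \<Rightarrow> bool" where
  "type3 S x \<longleftrightarrow>
     (\<exists>r1 r2 a1 a2 a3 b1 b2 b3.
        faces_at S x = {r1, r2, a1, a2, a3, b1, b2, b3} \<and>
        distinct [r1, r2, a1, a2, a3, b1, b2, b3] \<and>
        corner_label x r1 = LL \<and> corner_label x r2 = LL \<and>
        corner_label x a1 = Lt \<and> corner_label x a2 = Ll \<and> corner_label x a3 = Lt \<and>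
        corner_label x b1 = Lt \<and> corner_label x b2 = Ll \<and> corner_label x b3 = Lt \<and>
        link_adj x r1 a1 \<and> link_adj x a1 a2 \<and> link_adj x a2 a3 \<and> link_adj x a3 r2 \<and>
        link_adj x r2 b1 \<and> link_adj x b1 b2 \<and> link_adj x b2 b3 \<and> link_adj x b3 r1)"

end

theory Submission
  imports Defs
begin

(* Identify every link L_x with the Moebius ladder.  The corners of Sigma at x form a connected
   2-factor of the ladder, i.e. one of its five Hamiltonian cycles.  In those of types 1 and 2
   some t-edge joins two ladder vertices whose rungs are both missing: there is a triangle xyz
   such that the lozenges with obtuse corner at x along xy and along xz are not in Sigma.
   The lozenge along xy has its acute corner at y, and in every Hamiltonian cycle of the ladder
   a missing l-edge at a vertex forces a missing rung at its t-neighbour; so the lozenge with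
   obtuse corner at y along yz is not in Sigma.  Starting from xz instead, neither is the lozenge
   with obtuse corner at z along yz.  These are the two lozenges at the edge yz, so the link
   vertex yz of L_y meets at most one corner of Sigma, contradicting that Sigma cap L_y is a
   cycle. *)

section \<open>Hamiltonian cycles of the Moebius ladder\<close>

lemma Collect_mem_insert:
  "{x \<in> insert a A. P x} = (if P a then insert a {x \<in> A. P x} else {x \<in> A. P x})"
  by auto

lemma mem_ladder_edges:
  "(P, c) \<in> ladder_edges \<longleftrightarrow>
     (P = {0,4} \<and> c = LL) \<or> (P = {1,5} \<and> c = LL) \<or> (P = {2,6} \<and> c = LL) \<or> (P = {3,7} \<and> c = LL) \<or>
     (P = {0,1} \<and> c = Ll) \<or> (P = {2,3} \<and> c = Ll) \<or> (P = {4,5} \<and> c = Ll) \<or> (P = {6,7} \<and> c = Ll) \<or>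
     (P = {1,2} \<and> c = Lt) \<or> (P = {3,4} \<and> c = Lt) \<or> (P = {5,6} \<and> c = Lt) \<or> (P = {7,0} \<and> c = Lt)"
  unfolding ladder_edges_def by simp

lemma ladder_star:
  "{h \<in> ladder_edges. 0 \<in> fst h} = {({0,4},LL), ({0,1},Ll), ({7,0},Lt)}"
  "{h \<in> ladder_edges. 1 \<in> fst h} = {({1,5},LL), ({0,1},Ll), ({1,2},Lt)}"
  "{h \<in> ladder_edges. 2 \<in> fst h} = {({2,6},LL), ({2,3},Ll), ({1,2},Lt)}"
  "{h \<in> ladder_edges. 3 \<in> fst h} = {({3,7},LL), ({2,3},Ll), ({3,4},Lt)}"
  "{h \<in> ladder_edges. 4 \<in> fst h} = {({0,4},LL), ({4,5},Ll), ({3,4},Lt)}"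
  "{h \<in> ladder_edges. 5 \<in> fst h} = {({1,5},LL), ({4,5},Ll), ({5,6},Lt)}"
  "{h \<in> ladder_edges. 6 \<in> fst h} = {({2,6},LL), ({6,7},Ll), ({5,6},Lt)}"
  "{h \<in> ladder_edges. 7 \<in> fst h} = {({3,7},LL), ({6,7},Ll), ({7,0},Lt)}"
  unfolding ladder_edges_def Collect_mem_insert by simp_all

lemma less_8_cases:
  "i < (8::nat) \<Longrightarrow> i = 0 \<or> i = 1 \<or> i = 2 \<or> i = 3 \<or> i = 4 \<or> i = 5 \<or> i = 6 \<or> i = 7"
  by auto

lemma card_ladder_star: "i < 8 \<Longrightarrow> card {h \<in> ladder_edges. i \<in> fst h} = 3"
  by (drule less_8_cases, elim disjE; hypsubst, simp only: ladder_star; simp add: doubleton_eq_iff)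

lemma ladder_vertex_has_label: "i < 8 \<Longrightarrow> \<exists>P. (P, c) \<in> ladder_edges \<and> i \<in> P"
  by (drule less_8_cases, cases c) (auto simp: mem_ladder_edges)

lemma ladder_edge_less: "(P, c) \<in> ladder_edges \<Longrightarrow> k \<in> P \<Longrightarrow> k < 8"
  by (auto simp: mem_ladder_edges)

lemma ladder_Lt_edge_neq: "({i, j}, Lt) \<in> ladder_edges \<Longrightarrow> i \<noteq> j"
  by (auto simp: mem_ladder_edges doubleton_eq_iff)

definition ladder_two_factor :: "(nat set \<times> lab) set \<Rightarrow> bool" where
  "ladder_two_factor H \<longleftrightarrow> H \<subseteq> ladder_edges \<and> (\<forall>i<8. card {h \<in> H. i \<in> fst h} = 2)"

lemma ladder_two_factor_misses_one_edge:
  assumes H: "ladder_two_factor H" and h: "h \<in> ladder_edges" "i \<in> fst h"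
    and h': "h' \<in> ladder_edges" "i \<in> fst h'" and "h \<noteq> h'"
  shows "h \<in> H \<or> h' \<in> H"
proof (rule ccontr)
  assume missing: "\<not> ?thesis"
  have i: "i < 8" using h by (metis ladder_edge_less prod.collapse)
  have "{h \<in> H. i \<in> fst h} \<subseteq> {h \<in> ladder_edges. i \<in> fst h} - {h, h'}"
    using H missing by (auto simp: ladder_two_factor_def)
  then have "card {h \<in> H. i \<in> fst h} \<le> card ({h \<in> ladder_edges. i \<in> fst h} - {h, h'})"
    by (rule card_mono[rotated]) (simp add: ladder_edges_def)
  also have "\<dots> = 1"
    using card_ladder_star[OF i] h h' \<open>h \<noteq> h'\<close> by (simp add: ladder_edges_def)
  finally show False using H i by (simp add: ladder_two_factor_def)
qed

(* The edges are listed in the order of ladder_edges: ladder_two_factor_cases recognises the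
   cycles syntactically. *)
definition ham_cycle_type1 :: "(nat set \<times> lab) set" where
  "ham_cycle_type1 = {({0,1},Ll), ({2,3},Ll), ({4,5},Ll), ({6,7},Ll),
                      ({1,2},Lt), ({3,4},Lt), ({5,6},Lt), ({7,0},Lt)}"

definition ham_cycle_type2a :: "(nat set \<times> lab) set" where
  "ham_cycle_type2a = {({1,5},LL), ({2,6},LL), ({0,1},Ll), ({2,3},Ll), ({4,5},Ll), ({6,7},Ll),
                       ({3,4},Lt), ({7,0},Lt)}"

definition ham_cycle_type2b :: "(nat set \<times> lab) set" where
  "ham_cycle_type2b = {({0,4},LL), ({3,7},LL), ({0,1},Ll), ({2,3},Ll), ({4,5},Ll), ({6,7},Ll),
                       ({1,2},Lt), ({5,6},Lt)}"

definition ham_cycle_type3a :: "(nat set \<times> lab) set" where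
  "ham_cycle_type3a = {({0,4},LL), ({1,5},LL), ({2,3},Ll), ({6,7},Ll),
                       ({1,2},Lt), ({3,4},Lt), ({5,6},Lt), ({7,0},Lt)}"

definition ham_cycle_type3b :: "(nat set \<times> lab) set" where
  "ham_cycle_type3b = {({2,6},LL), ({3,7},LL), ({0,1},Ll), ({4,5},Ll),
                       ({1,2},Lt), ({3,4},Lt), ({5,6},Lt), ({7,0},Lt)}"

definition ladder_ham_cycles :: "(nat set \<times> lab) set set" where
  "ladder_ham_cycles =
     {ham_cycle_type1, ham_cycle_type2a, ham_cycle_type2b, ham_cycle_type3a, ham_cycle_type3b}"

definition exactly_two :: "bool \<Rightarrow> bool \<Rightarrow> bool \<Rightarrow> bool" where
  "exactly_two p q r \<longleftrightarrow> (p \<and> q \<and> \<not> r) \<or> (p \<and> r \<and> \<not> q) \<or> (q \<and> r \<and> \<not> p)"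

lemma exactly_two_if_card_Int:
  assumes "card (H \<inter> {a, b, c}) = 2" "a \<noteq> b" "a \<noteq> c" "b \<noteq> c"
  shows "exactly_two (a \<in> H) (b \<in> H) (c \<in> H)"
  using assms by (cases "a \<in> H"; cases "b \<in> H"; cases "c \<in> H")
    (simp_all add: exactly_two_def Int_insert_right card_insert_if)

(* r_i: the rung at vertex i; l_ij, t_ij: the ladder edge {i, j} labeled Ll resp. Lt *)
lemma ladder_two_factor_patterns:
  assumes "exactly_two r0 l01 t70" "exactly_two r1 l01 t12" "exactly_two r2 l23 t12"
    "exactly_two r3 l23 t34" "exactly_two r0 l45 t34" "exactly_two r1 l45 t56"
    "exactly_two r2 l67 t56" "exactly_two r3 l67 t70"
    "t12 \<or> t34 \<or> t56 \<or> t70" "l01 \<or> l23 \<or> l45 \<or> l67"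
  shows "(\<not>r0 \<and> \<not>r1 \<and> \<not>r2 \<and> \<not>r3 \<and> l01 \<and> l23 \<and> l45 \<and> l67 \<and> t12 \<and> t34 \<and> t56 \<and> t70) \<or>
         (\<not>r0 \<and> r1 \<and> r2 \<and> \<not>r3 \<and> l01 \<and> l23 \<and> l45 \<and> l67 \<and> \<not>t12 \<and> t34 \<and> \<not>t56 \<and> t70) \<or>
         (r0 \<and> \<not>r1 \<and> \<not>r2 \<and> r3 \<and> l01 \<and> l23 \<and> l45 \<and> l67 \<and> t12 \<and> \<not>t34 \<and> t56 \<and> \<not>t70) \<or>
         (r0 \<and> r1 \<and> \<not>r2 \<and> \<not>r3 \<and> \<not>l01 \<and> l23 \<and> \<not>l45 \<and> l67 \<and> t12 \<and> t34 \<and> t56 \<and> t70) \<or>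
         (\<not>r0 \<and> \<not>r1 \<and> r2 \<and> r3 \<and> l01 \<and> \<not>l23 \<and> l45 \<and> \<not>l67 \<and> t12 \<and> t34 \<and> t56 \<and> t70)"
  using assms unfolding exactly_two_def by sat

lemma ladder_two_factor_cases:
  assumes H: "ladder_two_factor H" and Lt: "\<exists>h\<in>H. snd h = Lt" and Ll: "\<exists>h\<in>H. snd h = Ll"
  shows "H \<in> ladder_ham_cycles"
proof -
  have sub: "H \<subseteq> ladder_edges" using H by (simp add: ladder_two_factor_def)
  have star: "card (H \<inter> {h \<in> ladder_edges. i \<in> fst h}) = 2" if "i < 8" for i
  proof -
    have "H \<inter> {h \<in> ladder_edges. i \<in> fst h} = {h \<in> H. i \<in> fst h}" using sub by blast
    then show ?thesis using H that by (simp add: ladder_two_factor_def)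
  qed
  have deg: "card (H \<inter> {({0,4},LL), ({0,1},Ll), ({7,0},Lt)}) = 2"
    "card (H \<inter> {({1,5},LL), ({0,1},Ll), ({1,2},Lt)}) = 2"
    "card (H \<inter> {({2,6},LL), ({2,3},Ll), ({1,2},Lt)}) = 2"
    "card (H \<inter> {({3,7},LL), ({2,3},Ll), ({3,4},Lt)}) = 2"
    "card (H \<inter> {({0,4},LL), ({4,5},Ll), ({3,4},Lt)}) = 2"
    "card (H \<inter> {({1,5},LL), ({4,5},Ll), ({5,6},Lt)}) = 2"
    "card (H \<inter> {({2,6},LL), ({6,7},Ll), ({5,6},Lt)}) = 2"
    "card (H \<inter> {({3,7},LL), ({6,7},Ll), ({7,0},Lt)}) = 2"
    unfolding ladder_star[symmetric] using star by simp_all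
  have two: "exactly_two (({0,4},LL) \<in> H) (({0,1},Ll) \<in> H) (({7,0},Lt) \<in> H)"
       "exactly_two (({1,5},LL) \<in> H) (({0,1},Ll) \<in> H) (({1,2},Lt) \<in> H)"
       "exactly_two (({2,6},LL) \<in> H) (({2,3},Ll) \<in> H) (({1,2},Lt) \<in> H)"
       "exactly_two (({3,7},LL) \<in> H) (({2,3},Ll) \<in> H) (({3,4},Lt) \<in> H)"
       "exactly_two (({0,4},LL) \<in> H) (({4,5},Ll) \<in> H) (({3,4},Lt) \<in> H)"
       "exactly_two (({1,5},LL) \<in> H) (({4,5},Ll) \<in> H) (({5,6},Lt) \<in> H)"
       "exactly_two (({2,6},LL) \<in> H) (({6,7},Ll) \<in> H) (({5,6},Lt) \<in> H)"
       "exactly_two (({3,7},LL) \<in> H) (({6,7},Ll) \<in> H) (({7,0},Lt) \<in> H)"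
    by (intro exactly_two_if_card_Int deg; simp add: doubleton_eq_iff)+
  have Lt': "({1,2},Lt) \<in> H \<or> ({3,4},Lt) \<in> H \<or> ({5,6},Lt) \<in> H \<or> ({7,0},Lt) \<in> H"
    using Lt sub by (force simp: mem_ladder_edges)
  have Ll': "({0,1},Ll) \<in> H \<or> ({2,3},Ll) \<in> H \<or> ({4,5},Ll) \<in> H \<or> ({6,7},Ll) \<in> H"
    using Ll sub by (force simp: mem_ladder_edges)
  have H_eq: "H = {h \<in> ladder_edges. h \<in> H}" using sub by blast
  from ladder_two_factor_patterns[OF two Lt' Ll'] show ?thesis
    by (elim disjE conjE; subst H_eq; unfold ladder_edges_def Collect_mem_insert;
        simp add: ladder_ham_cycles_def ham_cycle_type1_def ham_cycle_type2a_def ham_cycle_type2b_def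
          ham_cycle_type3a_def ham_cycle_type3b_def)
qed

lemma Lt_edge_crosses: "({i, j}, Lt) \<in> ladder_edges \<Longrightarrow> i \<in> {0,1,4,5} \<longleftrightarrow> j \<notin> {0,1,4,5}"
  by (auto simp: mem_ladder_edges doubleton_eq_iff)

lemma ladder_disconnected_without_label:
  assumes "c \<noteq> LL"
  obtains K where "0 \<in> K" "2 \<notin> K"
    "\<And>P c'. (P, c') \<in> ladder_edges \<Longrightarrow> c' \<noteq> c \<Longrightarrow> P \<subseteq> K \<or> P \<inter> K = {}"
proof (cases c)
  case Lt
  show ?thesis by (rule that[of "{0,1,4,5}"]) (auto simp: Lt mem_ladder_edges)
next
  case Ll
  show ?thesis by (rule that[of "{0,3,4,7}"]) (auto simp: Ll mem_ladder_edges)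
qed (use assms in simp)

lemma ham_cycle_missing_Ll_excludes_rung:
  assumes H: "H \<in> ladder_ham_cycles" and P: "(P, Ll) \<in> ladder_edges" "(P, Ll) \<notin> H" "i \<in> P"
    and t: "({i, j}, Lt) \<in> ladder_edges" and Q: "j \<in> Q"
  shows "(Q, LL) \<notin> H"
proof
  assume QH: "(Q, LL) \<in> H"
  (* Types 1 and 2 contain every l-edge.  In type 3 the missing l-edges and the rungs lie on the
     same side of the cut {0,1,4,5}, which every t-edge crosses. *)
  from H consider "H = ham_cycle_type1" | "H = ham_cycle_type2a" | "H = ham_cycle_type2b"
    | "H = ham_cycle_type3a" | "H = ham_cycle_type3b"
    by (auto simp: ladder_ham_cycles_def)
  then show False
  proof cases
    case 1
    with QH show False by (simp add: ham_cycle_type1_def)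
  next
    case 2
    with P show False by (auto simp: ham_cycle_type2a_def mem_ladder_edges)
  next
    case 3
    with P show False by (auto simp: ham_cycle_type2b_def mem_ladder_edges)
  next
    case 4
    have "i \<in> {0,1,4,5}" using P 4 by (auto simp: ham_cycle_type3a_def mem_ladder_edges)
    moreover have "j \<in> {0,1,4,5}" using QH Q 4 by (auto simp: ham_cycle_type3a_def)
    ultimately show False using Lt_edge_crosses[OF t] by blast
  next
    case 5
    have "i \<notin> {0,1,4,5}" using P 5 by (auto simp: ham_cycle_type3b_def mem_ladder_edges)
    moreover have "j \<notin> {0,1,4,5}" using QH Q 5 by (auto simp: ham_cycle_type3b_def)
    ultimately show False using Lt_edge_crosses[OF t] by blast
  qed
qed

lemma ham_cycle_type12_Lt_edge_between_missing_rungs: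
  assumes "H \<in> {ham_cycle_type1, ham_cycle_type2a, ham_cycle_type2b}"
  shows "\<exists>i j Q Q'. ({i, j}, Lt) \<in> ladder_edges \<and>
           (Q, LL) \<in> ladder_edges \<and> i \<in> Q \<and> (Q, LL) \<notin> H \<and>
           (Q', LL) \<in> ladder_edges \<and> j \<in> Q' \<and> (Q', LL) \<notin> H"
proof -
  have "({7, 0}, Lt) \<in> ladder_edges \<and>
        ({3, 7}, LL) \<in> ladder_edges \<and> 7 \<in> {3, 7::nat} \<and> ({3, 7}, LL) \<notin> H \<and>
        ({0, 4}, LL) \<in> ladder_edges \<and> 0 \<in> {0, 4::nat} \<and> ({0, 4}, LL) \<notin> H"
    if "H \<in> {ham_cycle_type1, ham_cycle_type2a}"
    using that by (auto simp: ladder_edges_def ham_cycle_type1_def ham_cycle_type2a_def doubleton_eq_iff)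
  moreover have "({1, 2}, Lt) \<in> ladder_edges \<and>
        ({1, 5}, LL) \<in> ladder_edges \<and> 1 \<in> {1, 5::nat} \<and> ({1, 5}, LL) \<notin> H \<and>
        ({2, 6}, LL) \<in> ladder_edges \<and> 2 \<in> {2, 6::nat} \<and> ({2, 6}, LL) \<notin> H"
    if "H = ham_cycle_type2b"
    using that by (simp add: ladder_edges_def ham_cycle_type2b_def doubleton_eq_iff)
  ultimately show ?thesis using assms by blast
qed

definition type3_shape :: "'a set \<Rightarrow> ('a \<Rightarrow> lab) \<Rightarrow> ('a \<Rightarrow> 'a \<Rightarrow> bool) \<Rightarrow> bool" where
  "type3_shape F lab adj \<longleftrightarrow>
     (\<exists>r1 r2 a1 a2 a3 b1 b2 b3.
        F = {r1, r2, a1, a2, a3, b1, b2, b3} \<and>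
        distinct [r1, r2, a1, a2, a3, b1, b2, b3] \<and>
        lab r1 = LL \<and> lab r2 = LL \<and>
        lab a1 = Lt \<and> lab a2 = Ll \<and> lab a3 = Lt \<and>
        lab b1 = Lt \<and> lab b2 = Ll \<and> lab b3 = Lt \<and>
        adj r1 a1 \<and> adj a1 a2 \<and> adj a2 a3 \<and> adj a3 r2 \<and>
        adj r2 b1 \<and> adj b1 b2 \<and> adj b2 b3 \<and> adj b3 r1)"

lemma type3_iff_shape: "type3 S x \<longleftrightarrow> type3_shape (faces_at S x) (corner_label x) (link_adj x)"
  by (simp add: type3_def type3_shape_def)

lemma type3_shape_transfer:
  assumes inj: "inj_on \<Psi> F"
    and lab: "\<And>f. f \<in> F \<Longrightarrow> lab' (\<Psi> f) = lab f"
    and adj: "\<And>f g. f \<in> F \<Longrightarrow> g \<in> F \<Longrightarrow> adj' (\<Psi> f) (\<Psi> g) \<Longrightarrow> adj f g"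
    and shape: "type3_shape (\<Psi> ` F) lab' adj'"
  shows "type3_shape F lab adj"
proof -
  define g where "g = inv_into F \<Psi>"
  have g_in: "g h \<in> F" and \<Psi>_g: "\<Psi> (g h) = h" if "h \<in> \<Psi> ` F" for h
    using that by (simp_all add: g_def inv_into_into f_inv_into_f)
  have lab_g: "lab (g h) = lab' h" if "h \<in> \<Psi> ` F" for h
    using lab[OF g_in[OF that]] \<Psi>_g[OF that] by simp
  have adj_g: "adj (g h) (g h')" if "h \<in> \<Psi> ` F" "h' \<in> \<Psi> ` F" "adj' h h'" for h h'
    using adj[OF g_in[OF that(1)] g_in[OF that(2)]] \<Psi>_g that by simp
  have F_eq: "F = g ` \<Psi> ` F"
    by (simp add: g_def inv_into_image_cancel[OF inj])
  from shape obtain r1 r2 a1 a2 a3 b1 b2 b3 where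
    H: "\<Psi> ` F = {r1, r2, a1, a2, a3, b1, b2, b3}" and
    dist: "distinct [r1, r2, a1, a2, a3, b1, b2, b3]" and
    labs: "lab' r1 = LL" "lab' r2 = LL" "lab' a1 = Lt" "lab' a2 = Ll" "lab' a3 = Lt"
      "lab' b1 = Lt" "lab' b2 = Ll" "lab' b3 = Lt" and
    adjs: "adj' r1 a1" "adj' a1 a2" "adj' a2 a3" "adj' a3 r2"
      "adj' r2 b1" "adj' b1 b2" "adj' b2 b3" "adj' b3 r1"
    unfolding type3_shape_def by blast
  have "distinct (map \<Psi> [g r1, g r2, g a1, g a2, g a3, g b1, g b2, g b3])"
    using dist \<Psi>_g H by simp
  then have dist_g: "distinct [g r1, g r2, g a1, g a2, g a3, g b1, g b2, g b3]"
    by (simp only: distinct_map)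
  have F_g: "F = {g r1, g r2, g a1, g a2, g a3, g b1, g b2, g b3}"
    using F_eq H by simp
  show ?thesis
    unfolding type3_shape_def
    by (rule exI[of _ "g r1"], rule exI[of _ "g r2"], rule exI[of _ "g a1"], rule exI[of _ "g a2"],
        rule exI[of _ "g a3"], rule exI[of _ "g b1"], rule exI[of _ "g b2"], rule exI[of _ "g b3"],
        intro conjI F_g dist_g) (simp_all add: labs adjs H lab_g adj_g)
qed

lemma ham_cycle_type3_shape:
  assumes "H \<in> {ham_cycle_type3a, ham_cycle_type3b}"
  shows "type3_shape H snd (\<lambda>h h'. fst h \<inter> fst h' \<noteq> {})"
proof -
  have "type3_shape ham_cycle_type3a snd (\<lambda>h h'. fst h \<inter> fst h' \<noteq> {})"
    unfolding type3_shape_def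
    by (rule exI[of _ "({0,4},LL)"], rule exI[of _ "({1,5},LL)"], rule exI[of _ "({3,4},Lt)"],
        rule exI[of _ "({2,3},Ll)"], rule exI[of _ "({1,2},Lt)"], rule exI[of _ "({5,6},Lt)"],
        rule exI[of _ "({6,7},Ll)"], rule exI[of _ "({7,0},Lt)"])
       (simp add: ham_cycle_type3a_def insert_commute doubleton_eq_iff)
  moreover have "type3_shape ham_cycle_type3b snd (\<lambda>h h'. fst h \<inter> fst h' \<noteq> {})"
    unfolding type3_shape_def
    by (rule exI[of _ "({2,6},LL)"], rule exI[of _ "({3,7},LL)"], rule exI[of _ "({5,6},Lt)"],
        rule exI[of _ "({4,5},Ll)"], rule exI[of _ "({3,4},Lt)"], rule exI[of _ "({7,0},Lt)"],
        rule exI[of _ "({0,1},Ll)"], rule exI[of _ "({1,2},Lt)"])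
       (simp add: ham_cycle_type3b_def insert_commute doubleton_eq_iff)
  ultimately show ?thesis using assms by blast
qed

section \<open>Corners of triangles and lozenges\<close>

lemma wf_cplx_facsD:
  assumes "wf_cplx C" "f \<in> facs C"
  shows "case f of
           Tri T \<Rightarrow> T \<subseteq> verts C \<and> card T = 3 \<and> (\<forall>e. e \<subseteq> T \<and> card e = 2 \<longrightarrow> e \<in> edgs C)
         | Loz A B \<Rightarrow> A \<union> B \<subseteq> verts C \<and> card A = 2 \<and> card B = 2 \<and> A \<inter> B = {} \<and>
                      (\<forall>a\<in>A. \<forall>b\<in>B. {a, b} \<in> edgs C)"
  using assms unfolding wf_cplx_def by blast

lemma corner_edges_subset_edges_at:
  assumes "wf_cplx C" "f \<in> facs C" "x \<in> fverts f"
  shows "corner_edges x f \<subseteq> edges_at C x"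
proof (cases f)
  case (Tri T)
  with wf_cplx_facsD[OF assms(1,2)] assms(3) show ?thesis
    by (auto simp: edges_at_def card_insert_if)
next
  case (Loz A B)
  with wf_cplx_facsD[OF assms(1,2)] assms(3) show ?thesis
    by (auto simp: edges_at_def insert_commute)
qed

lemma is_side_if_corner_edges:
  assumes "x \<in> fverts f" "e \<in> corner_edges x f"
  shows "is_side e f"
  using assms by (cases f) (auto simp: insert_commute split: if_splits)

lemma corner_edges_if_is_side:
  assumes "wf_cplx C" "f \<in> facs C" "is_side e f" "x \<in> e"
  shows "x \<in> fverts f" "e \<in> corner_edges x f"
proof -
  have "x \<in> fverts f \<and> e \<in> corner_edges x f"
  proof (cases f)
    case (Tri T)
    with assms(3) obtain a b where "e = {a, b}" "a \<noteq> b" "e \<subseteq> T"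
      by (auto simp: card_2_iff)
    with Tri assms(4) show ?thesis by (auto simp: insert_commute)
  next
    case (Loz A B)
    with wf_cplx_facsD[OF assms(1,2)] have "A \<inter> B = {}" by simp
    moreover from Loz assms(3) obtain a b where "a \<in> A" "b \<in> B" "e = {a, b}" by auto
    ultimately show ?thesis using Loz assms(4) by (auto simp: insert_commute)
  qed
  then show "x \<in> fverts f" "e \<in> corner_edges x f" by simp_all
qed

lemma corner_label_LL_side:
  assumes "is_side {u, v} f" "corner_label u f = LL"
  shows "corner_label v f = Ll"
proof (cases f)
  case (Loz A B)
  with assms obtain a b where "a \<in> A" "b \<in> B" "{u, v} = {a, b}" "u \<notin> A"
    by (auto split: if_splits)
  then have "v \<in> A" by (metis doubleton_eq_iff)
  with Loz show ?thesis by simp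
qed (use assms in simp)

lemma corner_label_Ll_side:
  assumes "wf_cplx C" "f \<in> facs C" "is_side {u, v} f" "corner_label u f = Ll"
  shows "corner_label v f = LL"
proof (cases f)
  case (Loz A B)
  with wf_cplx_facsD[OF assms(1,2)] have "A \<inter> B = {}" by simp
  moreover from Loz assms(3,4) obtain a b where "a \<in> A" "b \<in> B" "{u, v} = {a, b}" "u \<in> A"
    by (auto split: if_splits)
  ultimately have "v \<notin> A" by (auto simp: doubleton_eq_iff)
  with Loz show ?thesis by simp
qed (use assms in simp)

lemma corner_edges_Tri:
  "x \<noteq> y \<Longrightarrow> x \<noteq> z \<Longrightarrow> corner_edges x (Tri {x, y, z}) = {{x, y}, {x, z}}"
  by auto

lemma Tri_eq_if_subset:
  assumes "wf_cplx C" "Tri T \<in> facs C" "{x, y, z} \<subseteq> T" "distinct [x, y, z]"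
  shows "T = {x, y, z}"
proof (rule sym, rule card_subset_eq)
  have "card T = 3" using wf_cplx_facsD[OF assms(1,2)] by simp
  then show "finite T" by (intro card_ge_0_finite) simp
  show "card {x, y, z} = card T" using \<open>card T = 3\<close> assms(4) by simp
qed (use assms(3) in simp)

definition link_chart :: "'v cplx \<Rightarrow> 'v \<Rightarrow> 'v set \<Rightarrow> nat" where
  "link_chart C x = (SOME \<phi>. bij_betw \<phi> (edges_at C x) {0..<8} \<and>
     bij_betw (\<lambda>f. (\<phi> ` corner_edges x f, corner_label x f)) (faces_at (facs C) x) ladder_edges)"

definition corner_chart :: "'v cplx \<Rightarrow> 'v \<Rightarrow> 'v face \<Rightarrow> nat set \<times> lab" where
  "corner_chart C x f = (link_chart C x ` corner_edges x f, corner_label x f)"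

lemma chart_bij_if_link_is_ladder:
  assumes "link_is_ladder C x"
  shows "bij_betw (link_chart C x) (edges_at C x) {0..<8}"
    and "bij_betw (corner_chart C x) (faces_at (facs C) x) ladder_edges"
proof -
  have "bij_betw (link_chart C x) (edges_at C x) {0..<8} \<and>
     bij_betw (\<lambda>f. (link_chart C x ` corner_edges x f, corner_label x f)) (faces_at (facs C) x) ladder_edges"
    using assms unfolding link_is_ladder_def link_chart_def by (rule someI_ex)
  then show "bij_betw (link_chart C x) (edges_at C x) {0..<8}"
    and "bij_betw (corner_chart C x) (faces_at (facs C) x) ladder_edges"
    by (simp_all add: corner_chart_def[abs_def])
qed

section \<open>The link cycles of a Hamiltonian surface\<close>

locale brady_hamiltonian_surface =
  fixes C :: "'v cplx" and S :: "'v face set"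
  assumes brady: "brady_complex C" and surface: "hamiltonian_surface C S"
begin

lemma wf: "wf_cplx C"
  using brady by (simp add: brady_complex_def)

lemma surface_subset: "S \<subseteq> facs C"
  using surface by (simp add: hamiltonian_surface_def)

definition link_cycle :: "'v \<Rightarrow> (nat set \<times> lab) set" where
  "link_cycle x = corner_chart C x ` faces_at S x"

context
  fixes x assumes x: "x \<in> verts C"
begin

lemma link_is_ladder_at: "link_is_ladder C x"
  using brady x by (simp add: brady_complex_def)

lemmas link_chart_bij = chart_bij_if_link_is_ladder(1)[OF link_is_ladder_at]
  and corner_chart_bij = chart_bij_if_link_is_ladder(2)[OF link_is_ladder_at]

lemma link_chart_less: "e \<in> edges_at C x \<Longrightarrow> link_chart C x e < 8"
  using bij_betw_apply[OF link_chart_bij] by auto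

lemma link_chart_surj:
  assumes "i < 8"
  obtains e where "e \<in> edges_at C x" "link_chart C x e = i"
  using bij_betw_imp_surj_on[OF link_chart_bij] assms by (metis atLeastLessThan_iff imageE zero_le)

lemma corner_chart_in: "f \<in> facs C \<Longrightarrow> x \<in> fverts f \<Longrightarrow> corner_chart C x f \<in> ladder_edges"
  using bij_betw_apply[OF corner_chart_bij] by (simp add: faces_at_def)

lemma mem_corner_edges_iff:
  assumes "f \<in> facs C" "x \<in> fverts f" "e \<in> edges_at C x"
  shows "e \<in> corner_edges x f \<longleftrightarrow> link_chart C x e \<in> fst (corner_chart C x f)"
  using corner_edges_subset_edges_at[OF wf assms(1,2)] assms(3)
    bij_betw_imp_inj_on[OF link_chart_bij]
  by (auto simp: corner_chart_def inj_on_image_mem_iff)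

lemma corner_chart_surj:
  assumes "(P, c) \<in> ladder_edges" "e \<in> edges_at C x" "link_chart C x e \<in> P"
  obtains f where "f \<in> facs C" "x \<in> fverts f" "corner_chart C x f = (P, c)"
    "corner_label x f = c" "e \<in> corner_edges x f"
proof -
  obtain f where f: "f \<in> faces_at (facs C) x" "corner_chart C x f = (P, c)"
    using bij_betw_imp_surj_on[OF corner_chart_bij] assms(1) by (metis imageE)
  then have "f \<in> facs C" "x \<in> fverts f" by (simp_all add: faces_at_def)
  with f(2) assms(2,3) show ?thesis
    by (intro that) (auto simp: mem_corner_edges_iff corner_chart_def)
qed

lemma corner_chart_in_link_cycle_iff:
  assumes "f \<in> facs C" "x \<in> fverts f"
  shows "corner_chart C x f \<in> link_cycle x \<longleftrightarrow> f \<in> S"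
proof -
  have "f \<in> faces_at (facs C) x" "faces_at S x \<subseteq> faces_at (facs C) x"
    using assms surface_subset by (auto simp: faces_at_def)
  then show ?thesis
    using bij_betw_imp_inj_on[OF corner_chart_bij] assms
    by (auto simp: link_cycle_def inj_on_image_mem_iff faces_at_def)
qed

lemma link_cycle_subset: "link_cycle x \<subseteq> ladder_edges"
  using corner_chart_in surface_subset by (auto simp: link_cycle_def faces_at_def)

lemma edge_in_surface_corner:
  assumes "e \<in> edges_at C x"
  obtains f where "f \<in> faces_at S x" "e \<in> corner_edges x f"
proof -
  from assms have e: "e \<in> edgs C" "x \<in> e" by (simp_all add: edges_at_def)
  with surface obtain f where "f \<in> S" "is_side e f"
    unfolding hamiltonian_surface_def by blast
  with corner_edges_if_is_side[OF wf _ _ e(2)] surface_subset show ?thesis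
    by (intro that[of f]) (auto simp: faces_at_def)
qed

lemma surface_corner_degree:
  assumes "e \<in> edges_at C x"
  shows "card {f \<in> faces_at S x. e \<in> corner_edges x f} = 2"
proof -
  have "link_single_cycle S x" using surface x by (simp add: hamiltonian_surface_def)
  moreover have "e \<in> \<Union> (corner_edges x ` faces_at S x)"
    using edge_in_surface_corner[OF assms] by blast
  ultimately show ?thesis unfolding link_single_cycle_def Let_def by blast
qed

lemma surface_corners_connected:
  assumes "e \<in> edges_at C x" "e' \<in> edges_at C x"
  shows "(e, e') \<in> {(e, e'). \<exists>f\<in>faces_at S x. corner_edges x f = {e, e'}}\<^sup>*"
proof -
  have "link_single_cycle S x" using surface x by (simp add: hamiltonian_surface_def)
  moreover have "e \<in> \<Union> (corner_edges x ` faces_at S x)" "e' \<in> \<Union> (corner_edges x ` faces_at S x)"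
    using edge_in_surface_corner assms by blast+
  ultimately show ?thesis unfolding link_single_cycle_def Let_def by blast
qed

lemma link_cycle_degree:
  assumes "i < 8"
  shows "card {h \<in> link_cycle x. i \<in> fst h} = 2"
proof -
  obtain e where e: "e \<in> edges_at C x" "link_chart C x e = i"
    using link_chart_surj[OF assms] by blast
  let ?F = "{f \<in> faces_at S x. e \<in> corner_edges x f}"
  have "card ?F = 2" by (rule surface_corner_degree[OF e(1)])
  have F_sub: "faces_at S x \<subseteq> faces_at (facs C) x"
    using surface_subset by (auto simp: faces_at_def)
  have "{h \<in> link_cycle x. i \<in> fst h} = corner_chart C x ` ?F"
    using F_sub mem_corner_edges_iff[OF _ _ e(1)] e(2) by (auto simp: link_cycle_def faces_at_def)
  moreover have "inj_on (corner_chart C x) ?F"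
    using inj_on_subset[OF bij_betw_imp_inj_on[OF corner_chart_bij] F_sub] by (rule inj_on_subset) auto
  ultimately show ?thesis using \<open>card ?F = 2\<close> by (simp add: card_image)
qed

lemma link_cycle_two_factor: "ladder_two_factor (link_cycle x)"
  using link_cycle_subset link_cycle_degree by (simp add: ladder_two_factor_def)

lemma link_cycle_crosses:
  assumes "i \<in> K" "j \<notin> K" "i < 8" "j < 8"
  shows "\<exists>h\<in>link_cycle x. \<not> (fst h \<subseteq> K \<or> fst h \<inter> K = {})"
proof (rule ccontr)
  assume "\<not> ?thesis"
  then have split: "fst h \<subseteq> K \<or> fst h \<inter> K = {}" if "h \<in> link_cycle x" for h
    using that by blast
  obtain ei where ei: "ei \<in> edges_at C x" "link_chart C x ei = i"
    using link_chart_surj[OF assms(3)] by blast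
  obtain ej where ej: "ej \<in> edges_at C x" "link_chart C x ej = j"
    using link_chart_surj[OF assms(4)] by blast
  let ?R = "{(e, e'). \<exists>f\<in>faces_at S x. corner_edges x f = {e, e'}}"
  have "(ei, ej) \<in> ?R\<^sup>*" by (rule surface_corners_connected[OF ei(1) ej(1)])
  then have "ej \<in> edges_at C x \<and> link_chart C x ej \<in> K"
  proof (induction rule: rtrancl_induct)
    case base
    then show ?case using ei assms(1) by simp
  next
    case (step e e')
    then obtain f where f: "f \<in> faces_at S x" "corner_edges x f = {e, e'}" by auto
    then have "f \<in> facs C" "x \<in> fverts f" using surface_subset by (auto simp: faces_at_def)
    then have "e' \<in> edges_at C x" using corner_edges_subset_edges_at[OF wf] f(2) by blast
    moreover have "corner_chart C x f \<in> link_cycle x" using f(1) by (simp add: link_cycle_def)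
    then have "{link_chart C x e, link_chart C x e'} \<subseteq> K \<or> {link_chart C x e, link_chart C x e'} \<inter> K = {}"
      using split f(2) by (fastforce simp: corner_chart_def)
    ultimately show ?case using step.IH by auto
  qed
  with ej assms(2) show False by simp
qed

lemma link_cycle_has_label:
  assumes "c \<noteq> LL"
  shows "\<exists>h\<in>link_cycle x. snd h = c"
proof (rule ccontr)
  assume no_c: "\<not> ?thesis"
  obtain K where K: "0 \<in> K" "2 \<notin> K"
    and cut: "\<And>P c'. (P, c') \<in> ladder_edges \<Longrightarrow> c' \<noteq> c \<Longrightarrow> P \<subseteq> K \<or> P \<inter> K = {}"
    using ladder_disconnected_without_label[OF assms] by blast
  have "fst h \<subseteq> K \<or> fst h \<inter> K = {}" if "h \<in> link_cycle x" for h
    using that no_c link_cycle_subset cut[of "fst h" "snd h"] by auto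
  with link_cycle_crosses[OF K] show False by auto
qed

lemma link_cycle_ham_cycle: "link_cycle x \<in> ladder_ham_cycles"
  using ladder_two_factor_cases link_cycle_two_factor link_cycle_has_label by simp

lemma type3_if_link_cycle_type3:
  assumes "link_cycle x \<in> {ham_cycle_type3a, ham_cycle_type3b}"
  shows "type3 S x"
proof -
  have F_sub: "faces_at S x \<subseteq> faces_at (facs C) x"
    using surface_subset by (auto simp: faces_at_def)
  have inj_edges: "inj_on (link_chart C x) (edges_at C x)"
    by (rule bij_betw_imp_inj_on[OF link_chart_bij])
  have adj: "link_adj x f g"
    if "f \<in> faces_at S x" "g \<in> faces_at S x"
      "fst (corner_chart C x f) \<inter> fst (corner_chart C x g) \<noteq> {}" for f g
  proof -
    have "corner_edges x f \<subseteq> edges_at C x" "corner_edges x g \<subseteq> edges_at C x"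
      using that(1,2) F_sub corner_edges_subset_edges_at[OF wf] by (auto simp: faces_at_def)
    then have "link_chart C x ` (corner_edges x f \<inter> corner_edges x g)
        = fst (corner_chart C x f) \<inter> fst (corner_chart C x g)"
      by (simp add: corner_chart_def inj_on_image_Int[OF inj_edges])
    with that(3) show ?thesis by (auto simp: link_adj_def)
  qed
  show ?thesis
    unfolding type3_iff_shape
  proof (rule type3_shape_transfer[where \<Psi> = "corner_chart C x" and lab' = snd, OF _ _ adj])
    show "inj_on (corner_chart C x) (faces_at S x)"
      using bij_betw_imp_inj_on[OF corner_chart_bij] F_sub by (rule inj_on_subset)
    show "type3_shape (corner_chart C x ` faces_at S x) snd (\<lambda>h h'. fst h \<inter> fst h' \<noteq> {})"
      using ham_cycle_type3_shape[OF assms] by (simp add: link_cycle_def)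
  qed (simp add: corner_chart_def)
qed

lemma corner_with_label:
  assumes "e \<in> edges_at C x"
  obtains f where "f \<in> facs C" "x \<in> fverts f" "corner_label x f = c" "e \<in> corner_edges x f"
proof -
  obtain P where "(P, c) \<in> ladder_edges" "link_chart C x e \<in> P"
    using ladder_vertex_has_label[OF link_chart_less[OF assms]] by blast
  with corner_chart_surj[OF _ assms] show ?thesis using that by metis
qed

lemma surface_contains_one_of_two_corners:
  assumes "f \<in> facs C" "x \<in> fverts f" "f' \<in> facs C" "x \<in> fverts f'"
    and "corner_label x f \<noteq> corner_label x f'"
    and "e \<in> edges_at C x" "e \<in> corner_edges x f" "e \<in> corner_edges x f'"
  shows "f \<in> S \<or> f' \<in> S"
  using ladder_two_factor_misses_one_edge[OF link_cycle_two_factor,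
      of "corner_chart C x f" "link_chart C x e" "corner_chart C x f'"]
    assms corner_chart_in mem_corner_edges_iff corner_chart_in_link_cycle_iff
  by (auto simp: corner_chart_def)

lemma Lt_corner_triangle:
  assumes t: "({i, j}, Lt) \<in> ladder_edges"
  obtains y z where "Tri {x, y, z} \<in> facs C" "x \<noteq> y" "y \<noteq> z" "x \<noteq> z"
    "{x, y} \<in> edges_at C x" "link_chart C x {x, y} = i"
    "{x, z} \<in> edges_at C x" "link_chart C x {x, z} = j"
proof -
  obtain e where e: "e \<in> edges_at C x" "link_chart C x e = i"
    using link_chart_surj ladder_edge_less[OF t] by blast
  obtain e' where e': "e' \<in> edges_at C x" "link_chart C x e' = j"
    using link_chart_surj ladder_edge_less[OF t] by blast
  obtain f where f: "f \<in> facs C" "x \<in> fverts f" "corner_chart C x f = ({i, j}, Lt)"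
      "corner_label x f = Lt" "e \<in> corner_edges x f"
    using corner_chart_surj[OF t e(1)] e(2) by auto
  have "e' \<in> corner_edges x f" using mem_corner_edges_iff[OF f(1,2) e'(1)] f(3) e'(2) by simp
  from f(2,4) obtain T where T: "f = Tri T" "x \<in> T" by (cases f) (auto split: if_splits)
  with f(5) \<open>e' \<in> corner_edges x f\<close> obtain y z
    where y: "y \<in> T" "x \<noteq> y" "e = {x, y}" and z: "z \<in> T" "x \<noteq> z" "e' = {x, z}"
    by auto
  have "y \<noteq> z" using ladder_Lt_edge_neq[OF t] e(2) e'(2) y(3) z(3) by auto
  then have "Tri {x, y, z} \<in> facs C"
    using Tri_eq_if_subset[OF wf, of T x y z] f(1) T y z by simp
  with that \<open>y \<noteq> z\<close> y z e e' show ?thesis by blast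
qed

lemma missing_Ll_corner_excludes_rung:
  assumes P: "P \<in> facs C" "x \<in> fverts P" "corner_label x P = Ll" "e \<in> corner_edges x P" "P \<notin> S"
    and T: "T \<in> facs C" "x \<in> fverts T" "corner_label x T = Lt" "corner_edges x T = {e, e'}"
    and Q: "Q \<in> facs C" "x \<in> fverts Q" "corner_label x Q = LL" "e' \<in> corner_edges x Q"
  shows "Q \<notin> S"
proof -
  let ?\<phi> = "link_chart C x"
  have "(fst (corner_chart C x Q), LL) \<notin> link_cycle x"
  proof (rule ham_cycle_missing_Ll_excludes_rung[OF link_cycle_ham_cycle])
    show "(fst (corner_chart C x P), Ll) \<in> ladder_edges"
      "(fst (corner_chart C x P), Ll) \<notin> link_cycle x"
      using corner_chart_in[OF P(1,2)] corner_chart_in_link_cycle_iff[OF P(1,2)] P(3,5)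
      by (simp_all add: corner_chart_def)
    show "?\<phi> e \<in> fst (corner_chart C x P)" using P(4) by (simp add: corner_chart_def)
    show "({?\<phi> e, ?\<phi> e'}, Lt) \<in> ladder_edges"
      using corner_chart_in[OF T(1,2)] T(3,4) by (simp add: corner_chart_def)
    show "?\<phi> e' \<in> fst (corner_chart C x Q)" using Q(4) by (simp add: corner_chart_def)
  qed
  then show ?thesis
    using corner_chart_in_link_cycle_iff[OF Q(1,2)] Q(3) by (simp add: corner_chart_def)
qed

end

lemma missing_rung_propagates:
  assumes T: "Tri {x, y, z} \<in> facs C" "x \<noteq> y" "y \<noteq> z" "x \<noteq> z"
    and R: "R \<in> facs C" "x \<in> fverts R" "corner_label x R = LL" "{x, y} \<in> corner_edges x R" "R \<notin> S"
    and G: "G \<in> facs C" "y \<in> fverts G" "corner_label y G = LL" "{y, z} \<in> corner_edges y G"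
  shows "G \<notin> S"
proof -
  have y: "y \<in> verts C" using wf_cplx_facsD[OF wf T(1)] by simp
  have side: "is_side {x, y} R" by (rule is_side_if_corner_edges[OF R(2,4)])
  have Ry: "y \<in> fverts R" "{x, y} \<in> corner_edges y R"
    using corner_edges_if_is_side[OF wf R(1) side] by simp_all
  have "corner_label y R = Ll" by (rule corner_label_LL_side[OF side R(3)])
  moreover have "corner_edges y (Tri {x, y, z}) = {{x, y}, {y, z}}"
    using corner_edges_Tri[of y x z] T(2,3) by (simp add: insert_commute)
  ultimately show ?thesis
    by (intro missing_Ll_corner_excludes_rung[OF y R(1) Ry(1) _ Ry(2) R(5) T(1) _ _ _ G]) simp_all
qed

lemma no_Lt_corner_between_missing_rungs:
  assumes T: "Tri {x, y, z} \<in> facs C" "x \<noteq> y" "y \<noteq> z" "x \<noteq> z"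
    and R: "R \<in> facs C" "x \<in> fverts R" "corner_label x R = LL" "{x, y} \<in> corner_edges x R" "R \<notin> S"
    and R': "R' \<in> facs C" "x \<in> fverts R'" "corner_label x R' = LL" "{x, z} \<in> corner_edges x R'" "R' \<notin> S"
  shows False
proof -
  have y: "y \<in> verts C" using wf_cplx_facsD[OF wf T(1)] by simp
  have T': "Tri {x, z, y} \<in> facs C" using T(1) by (simp add: insert_commute)
  have "{y, z} \<in> corner_edges y (Tri {x, y, z})" using T(2,3) by auto
  then have yz: "{y, z} \<in> edges_at C y"
    using corner_edges_subset_edges_at[OF wf T(1)] by auto
  obtain G where G: "G \<in> facs C" "y \<in> fverts G" "corner_label y G = LL" "{y, z} \<in> corner_edges y G"
    using corner_with_label[OF y yz] by blast
  obtain G' where G': "G' \<in> facs C" "y \<in> fverts G'" "corner_label y G' = Ll" "{y, z} \<in> corner_edges y G'"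
    using corner_with_label[OF y yz] by blast
  have "G \<notin> S" by (rule missing_rung_propagates[OF T R G])
  moreover have "G' \<notin> S"
  proof -
    have side: "is_side {y, z} G'" by (rule is_side_if_corner_edges[OF G'(2,4)])
    have "corner_label z G' = LL" by (rule corner_label_Ll_side[OF wf G'(1) side G'(3)])
    moreover have "z \<in> fverts G'" "{z, y} \<in> corner_edges z G'"
      using corner_edges_if_is_side[OF wf G'(1) side] by (simp_all add: insert_commute)
    ultimately show ?thesis
      using missing_rung_propagates[OF T' T(4) T(3)[symmetric] T(2) R' G'(1)] by simp
  qed
  ultimately show False
    using surface_contains_one_of_two_corners[OF y G(1,2) G'(1,2) _ yz G(4) G'(4)] G(3) G'(3)
    by simp
qed

lemma link_cycle_not_type12:
  assumes x: "x \<in> verts C"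
  shows "link_cycle x \<notin> {ham_cycle_type1, ham_cycle_type2a, ham_cycle_type2b}"
proof
  assume type12: "link_cycle x \<in> {ham_cycle_type1, ham_cycle_type2a, ham_cycle_type2b}"
  obtain i j Q Q' where t: "({i, j}, Lt) \<in> ladder_edges"
    and Q: "(Q, LL) \<in> ladder_edges" "i \<in> Q" "(Q, LL) \<notin> link_cycle x"
    and Q': "(Q', LL) \<in> ladder_edges" "j \<in> Q'" "(Q', LL) \<notin> link_cycle x"
    using ham_cycle_type12_Lt_edge_between_missing_rungs[OF type12] by blast
  obtain y z where T: "Tri {x, y, z} \<in> facs C" "x \<noteq> y" "y \<noteq> z" "x \<noteq> z"
    and xy: "{x, y} \<in> edges_at C x" "link_chart C x {x, y} = i"
    and xz: "{x, z} \<in> edges_at C x" "link_chart C x {x, z} = j"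
    by (rule Lt_corner_triangle[OF x t])
  obtain R where R: "R \<in> facs C" "x \<in> fverts R" "corner_chart C x R = (Q, LL)"
      "corner_label x R = LL" "{x, y} \<in> corner_edges x R"
    using corner_chart_surj[OF x Q(1) xy(1)] xy(2) Q(2) by blast
  obtain R' where R': "R' \<in> facs C" "x \<in> fverts R'" "corner_chart C x R' = (Q', LL)"
      "corner_label x R' = LL" "{x, z} \<in> corner_edges x R'"
    using corner_chart_surj[OF x Q'(1) xz(1)] xz(2) Q'(2) by blast
  have "R \<notin> S" "R' \<notin> S"
    using corner_chart_in_link_cycle_iff[OF x R(1,2)] corner_chart_in_link_cycle_iff[OF x R'(1,2)]
      R(3) R'(3) Q(3) Q'(3) by simp_all
  with no_Lt_corner_between_missing_rungs[OF T R(1,2,4,5)] R'(1,2,4,5) show False by blast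
qed

lemma type3_at_vertex:
  assumes "x \<in> verts C"
  shows "type3 S x"
proof (rule type3_if_link_cycle_type3[OF assms])
  show "link_cycle x \<in> {ham_cycle_type3a, ham_cycle_type3b}"
    using link_cycle_ham_cycle[OF assms] link_cycle_not_type12[OF assms]
    unfolding ladder_ham_cycles_def by blast
qed

end

theorem mainTheorem5:
  fixes C :: "'v cplx" and S :: "'v face set"
  assumes "brady_complex C"
    and "hamiltonian_surface C S"
  shows "\<forall>x\<in>verts C. type3 S x"
proof -
  interpret brady_hamiltonian_surface C S
    using assms by unfold_locales
  show ?thesis using type3_at_vertex by blast
qed

end
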